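(* Let $\beta,\rho>0$ and $y\in\mathbb{R}^n$. Define $\Sigma=\mathrm{Diag}(\sigma)\in\mathbb{R}^{(n-1)\times(n-1)}$ by $\sigma_i=1$ if $i\in\mathcal I_{\mathcal D}(P_yy-\rho w)$ and $\sigma_i=0$ otherwise, and $\Theta=\mathrm{Diag}(\theta)\in\mathbb{R}^{n\times n}$ by $\theta_i=0$ if $|(S_\rho(y))_i|\le\beta$ and $\theta_i=1$ otherwise. Then \[ M:=\Theta P_y^T\big(I_n-B^T(\Sigma BB^T\Sigma)^{\dagger}B\big)P_y \;\in\;\mathcal M(y). \]
   Context: $S_\rho(y):=\operatorname{argmin}_x\{\tfrac12\|x-y\|^2+\rho\sum_{i<j}|x_i-x_j|\}$. $w_k=n-2k+1$. $\mathcal D:=\{x: x_1\ge\cdots\ge x_n\}$, $\Pi_{\mathcal D}$ the Euclidean projection. $B\in\mathbb{R}^{(n-1)\times n}$ with $Bx=(x_1-x_2,\dots,x_{n-1}-x_n)^T$, $B_i$ its $i$-th row, $B_K$ rows indexed by $K$; $C^\dagger$ is the Moore–Penrose inverse. For each $y$, $P_y$ is a fixed permutation matrix with $P_yy$ non-increasing. For $v\in\mathbb{R}^n$: $\mathcal M_{\mathcal D}(v)$ is the set of $\lambda\in\mathbb{R}^{n-1}$ with $\Pi_{\mathcal D}(v)-v+B^T\lambda=0$, $B\Pi_{\mathcal D}(v)\ge0$, $\lambda\le0$, $\lambda^TB\Pi_{\mathcal D}(v)=0$; $\mathcal I_{\mathcal D}(v):=\{i\in\{1,\dots,n-1\}: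 B_i\Pi_{\mathcal D}(v)=0\}$; $\mathcal K_{\mathcal D}(v):=\{K:\exists\lambda\in\mathcal M_{\mathcal D}(v),\ \mathrm{supp}(\lambda)\subseteq K\subseteq\mathcal I_{\mathcal D}(v),\ B_K\text{ full row rank}\}$; $\mathcal Q_{\mathcal D}(v):=\{I_n-B_K^T(B_KB_K^T)^{-1}B_K:K\in\mathcal K_{\mathcal D}(v)\}$; $\mathcal Q_{S_\rho}(y):=\{P_y^T\widehat QP_y:\widehat Q\in\mathcal Q_{\mathcal D}(P_yy-\rho w)\}$. $\partial_B\mathrm{Prox}_{\beta\|\cdot\|_1}(\eta)$ is the set of $\mathrm{Diag}(q)$ with $q_i=0$ if $|\eta_i|<\beta$, $q_i\in\{0,1\}$ if $|\eta_i|=\beta$, $q_i=1$ otherwise. $\mathcal M(y):=\{M\text{ symmetric}: M=\Theta Q,\ \Theta\in\partial_B\mathrm{Prox}_{\beta\|\cdot\|_1}(S_\rho(y)),\ Q\in\mathcal Q_{S_\rho}(y)\}$. *)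

theory Defs
  imports "Jordan_Normal_Form.DL_Submatrix" "HOL-Combinatorics.Permutations"
begin

(* Vectors of R^n are JNF vectors of dimension n, matrices are JNF matrices;
   indices are 0-based: component i here is component i+1 in the paper. *)

definition sqnorm :: "real vec \<Rightarrow> real" where
  "sqnorm v = (\<Sum>i<dim_vec v. (v $ i)^2)"

definition slope_obj :: "nat \<Rightarrow> real \<Rightarrow> real vec \<Rightarrow> real vec \<Rightarrow> real" where
  "slope_obj n \<rho> y x = sqnorm (x - y) / 2 + \<rho> * (\<Sum>i<n. \<Sum>j\<in>{i<..<n}. \<bar>x $ i - x $ j\<bar>)"

definition S_prox :: "nat \<Rightarrow> real \<Rightarrow> real vec \<Rightarrow> real vec" where
  "S_prox n \<rho> y = (THE x. x \<in> carrier_vec n \<and>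
      (\<forall>z\<in>carrier_vec n. slope_obj n \<rho> y x \<le> slope_obj n \<rho> y z))"

(* w_k = n - 2k + 1 for k = 1..n, i.e. w $ i = n - 2(i+1) + 1 *)
definition wvec :: "nat \<Rightarrow> real vec" where
  "wvec n = vec n (\<lambda>i. real n - 2 * real (i + 1) + 1)"

definition Dcone :: "nat \<Rightarrow> real vec set" where
  "Dcone n = {x \<in> carrier_vec n. \<forall>i. i + 1 < n \<longrightarrow> x $ i \<ge> x $ (i + 1)}"

definition projD :: "nat \<Rightarrow> real vec \<Rightarrow> real vec" where
  "projD n v = (THE x. x \<in> Dcone n \<and> (\<forall>z\<in>Dcone n. sqnorm (x - v) \<le> sqnorm (z - v)))"

definition Bmat :: "nat \<Rightarrow> real mat" where
  "Bmat n = mat (n - 1) n (\<lambda>(i, j). if j = i then 1 else if j = i + 1 then -1 else 0)"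

definition Brows :: "nat \<Rightarrow> nat set \<Rightarrow> real mat" where
  "Brows n K = submatrix (Bmat n) K {..<n}"

definition full_row_rank :: "real mat \<Rightarrow> bool" where
  "full_row_rank A \<longleftrightarrow> (\<forall>c \<in> carrier_vec (dim_row A). transpose_mat A *\<^sub>v c = 0\<^sub>v (dim_col A) \<longrightarrow> c = 0\<^sub>v (dim_row A))"

definition mat_inv :: "real mat \<Rightarrow> real mat" where
  "mat_inv A = (THE X. X \<in> carrier_mat (dim_row A) (dim_row A) \<and>
       A * X = 1\<^sub>m (dim_row A) \<and> X * A = 1\<^sub>m (dim_row A))"

definition pinv :: "real mat \<Rightarrow> real mat" where
  "pinv A = (THE X. X \<in> carrier_mat (dim_col A) (dim_row A) \<and>
       A * X * A = A \<and> X * A * X = X \<and>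
       transpose_mat (A * X) = A * X \<and> transpose_mat (X * A) = X * A)"

definition diag_of :: "nat \<Rightarrow> (nat \<Rightarrow> real) \<Rightarrow> real mat" where
  "diag_of n d = mat n n (\<lambda>(i, j). if i = j then d i else 0)"

(* permutation matrix: (P x) $ i = x $ (\<pi> i) *)
definition perm_mat :: "nat \<Rightarrow> (nat \<Rightarrow> nat) \<Rightarrow> real mat" where
  "perm_mat n \<pi> = mat n n (\<lambda>(i, j). if \<pi> i = j then 1 else 0)"

definition is_perm_mat :: "nat \<Rightarrow> real mat \<Rightarrow> bool" where
  "is_perm_mat n P \<longleftrightarrow> (\<exists>\<pi>. \<pi> permutes {..<n} \<and> P = perm_mat n \<pi>)"

definition nonincreasing_vec :: "real vec \<Rightarrow> bool" where
  "nonincreasing_vec x \<longleftrightarrow> (\<forall>i j. i \<le> j \<longrightarrow> j < dim_vec x \<longrightarrow> x $ j \<le> x $ i)"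

definition MD :: "nat \<Rightarrow> real vec \<Rightarrow> real vec set" where
  "MD n v = {lam \<in> carrier_vec (n - 1).
      projD n v - v + transpose_mat (Bmat n) *\<^sub>v lam = 0\<^sub>v n \<and>
      (\<forall>i < n - 1. (Bmat n *\<^sub>v projD n v) $ i \<ge> 0) \<and>
      (\<forall>i < n - 1. lam $ i \<le> 0) \<and>
      lam \<bullet> (Bmat n *\<^sub>v projD n v) = 0}"

definition ID :: "nat \<Rightarrow> real vec \<Rightarrow> nat set" where
  "ID n v = {i. i < n - 1 \<and> (Bmat n *\<^sub>v projD n v) $ i = 0}"

definition KD :: "nat \<Rightarrow> real vec \<Rightarrow> nat set set" where
  "KD n v = {K. \<exists>lam \<in> MD n v. {i. i < n - 1 \<and> lam $ i \<noteq> 0} \<subseteq> K \<and> K \<subseteq> ID n v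
       \<and> full_row_rank (Brows n K)}"

definition QD :: "nat \<Rightarrow> real vec \<Rightarrow> real mat set" where
  "QD n v = (\<lambda>K. 1\<^sub>m n - transpose_mat (Brows n K) *
       mat_inv (Brows n K * transpose_mat (Brows n K)) * Brows n K) ` KD n v"

definition QS :: "nat \<Rightarrow> real \<Rightarrow> real mat \<Rightarrow> real vec \<Rightarrow> real mat set" where
  "QS n \<rho> P y = (\<lambda>Q. transpose_mat P * Q * P) ` QD n (P *\<^sub>v y - \<rho> \<cdot>\<^sub>v wvec n)"

(* B-subdifferential of Prox_{beta ||.||_1} at eta *)
definition dB_prox_l1 :: "nat \<Rightarrow> real \<Rightarrow> real vec \<Rightarrow> real mat set" where
  "dB_prox_l1 n \<beta> \<eta> = {diag_of n q | q.
      \<forall>i < n. (\<bar>\<eta> $ i\<bar> < \<beta> \<longrightarrow> q i = 0) \<and> (\<bar>\<eta> $ i\<bar> = \<beta> \<longrightarrow> q i \<in> {0, 1})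
             \<and> (\<bar>\<eta> $ i\<bar> > \<beta> \<longrightarrow> q i = 1)}"

definition Mset :: "nat \<Rightarrow> real \<Rightarrow> real \<Rightarrow> real mat \<Rightarrow> real vec \<Rightarrow> real mat set" where
  "Mset n \<beta> \<rho> P y = {M. M = transpose_mat M \<and>
      (\<exists>\<Theta> \<in> dB_prox_l1 n \<beta> (S_prox n \<rho> y). \<exists>Q \<in> QS n \<rho> P y. M = \<Theta> * Q)}"

end

theory Submission
  imports Defs "Jordan_Normal_Form.Determinant" "HOL-Analysis.Function_Topology"
begin

(* Let \<pi> sort y non-increasingly and u = P y. The objective of S_\<rho> is invariant under
   simultaneous permutation of x and y, so S_\<rho>(y) = P^T S_\<rho>(u). Since u is sorted, so is
   S_\<rho>(u): swapping an inverted pair of entries does not increase the objective. On the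
   monotone cone D the penalty \<Sum>_{i<j} |x_i - x_j| is the linear form \<langle>w, x\<rangle>, so
   x := S_\<rho>(u) = \<Pi>_D(v) with v = u - \<rho> w. The multiplier \<lambda>_k = \<Sum>_{i\<le>k} (v_i - x_i) of this
   projection vanishes off the active set K = I_D(v), and B_K has full row rank, so K \<in> K_D(v).
   With E the selector of the rows in K we have \<Sigma> = E E^T and \<Sigma> B B^T \<Sigma> = E (B_K B_K^T) E^T,
   whose pseudoinverse is E (B_K B_K^T)^{-1} E^T; hence the matrix of the theorem is
   \<Theta> P^T (I - B_K^T (B_K B_K^T)^{-1} B_K) P. It is symmetric because the permuted \<Theta> is
   constant on the blocks of equal entries of x and therefore commutes with the projector. *)

section \<open>The difference matrix B\<close>

lemma Bmat_carrier [simp]: "Bmat n \<in> carrier_mat (n - 1) n"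
  by (simp add: Bmat_def)

lemma Bmat_carrier_Suc [simp]: "Bmat n \<in> carrier_mat (n - Suc 0) n"
  using Bmat_carrier[of n] by simp

lemma Bmat_index:
  "i < n - 1 \<Longrightarrow> j < n \<Longrightarrow> Bmat n $$ (i, j) = (if j = i then 1 else if j = i + 1 then -1 else 0)"
  by (simp add: Bmat_def)

lemma Bmat_mult_vec:
  assumes "x \<in> carrier_vec n" "i < n - 1"
  shows "(Bmat n *\<^sub>v x) $ i = x $ i - x $ (i + 1)"
proof -
  have "(Bmat n *\<^sub>v x) $ i = (\<Sum>j<n. Bmat n $$ (i, j) * x $ j)"
    using assms by (simp add: mult_mat_vec_def scalar_prod_def Bmat_def lessThan_atLeast0)
  also have "\<dots> = (\<Sum>j<n. (if j = i then x $ j else 0) + (if j = i + 1 then - x $ j else 0))"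
    using assms by (intro sum.cong) (auto simp: Bmat_index)
  also have "\<dots> = x $ i - x $ (i + 1)"
    using assms by (auto simp: sum.distrib)
  finally show ?thesis .
qed

lemma transpose_Bmat_mult_vec:
  assumes "c \<in> carrier_vec (n - 1)" "j < n"
  shows "(transpose_mat (Bmat n) *\<^sub>v c) $ j
    = (if j < n - 1 then c $ j else 0) - (if 0 < j then c $ (j - 1) else 0)"
proof -
  have "(transpose_mat (Bmat n) *\<^sub>v c) $ j = (\<Sum>i<n-1. Bmat n $$ (i, j) * c $ i)"
    using assms by (simp add: mult_mat_vec_def scalar_prod_def Bmat_def lessThan_atLeast0)
  also have "\<dots> = (\<Sum>i<n-1. (if i = j then c $ i else 0) - (if i = j - 1 \<and> 0 < j then c $ i else 0))"
    using assms by (intro sum.cong) (auto simp: Bmat_index)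
  also have "\<dots> = (if j < n - 1 then c $ j else 0) - (if 0 < j then c $ (j - 1) else 0)"
    using assms by (auto simp: sum_subtractf)
  finally show ?thesis .
qed

lemma transpose_Bmat_mult_vec_eq_0:
  assumes c: "c \<in> carrier_vec (n - 1)" and zero: "transpose_mat (Bmat n) *\<^sub>v c = 0\<^sub>v n"
  shows "c = 0\<^sub>v (n - 1)"
proof -
  have entry: "(if j < n - 1 then c $ j else 0) - (if 0 < j then c $ (j - 1) else 0) = 0"
    if "j < n" for j
    using transpose_Bmat_mult_vec[OF c that] zero that by (metis index_zero_vec(1))
  have "j < n - 1 \<longrightarrow> c $ j = 0" for j
  proof (induction j)
    case (Suc j)
    then show ?case
      using entry[of "Suc j"] by auto
  qed (use entry[of 0] in auto)
  then show ?thesis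
    using c by (intro eq_vecI) auto
qed

section \<open>Permutation and diagonal matrices\<close>

lemma sum_indicator_mult:
  fixes g :: "nat \<Rightarrow> 'a :: semiring_1"
  assumes "p < m"
  shows "(\<Sum>a<m. (if a = p then 1 else 0) * g a) = g p"
    and "(\<Sum>a<m. (if p = a then 1 else 0) * g a) = g p"
proof -
  have "(\<Sum>a<m. (if a = p then 1 else 0) * g a) = (\<Sum>a<m. if a = p then g a else 0)"
    by (intro sum.cong) auto
  also have "\<dots> = g p"
    using assms by simp
  finally show "(\<Sum>a<m. (if a = p then 1 else 0) * g a) = g p" .
  moreover have "(\<Sum>a<m. (if p = a then 1 else 0) * g a) = (\<Sum>a<m. (if a = p then 1 else 0) * g a)"
    by (intro sum.cong) auto
  ultimately show "(\<Sum>a<m. (if p = a then 1 else 0) * g a) = g p"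
    by simp
qed

lemma perm_mat_carrier [simp]: "perm_mat n \<pi> \<in> carrier_mat n n"
  by (simp add: perm_mat_def)

lemma perm_mat_mult_vec:
  assumes p: "\<pi> permutes {..<n}" and z: "z \<in> carrier_vec n"
  shows "perm_mat n \<pi> *\<^sub>v z = vec n (\<lambda>i. z $ \<pi> i)"
proof (rule eq_vecI)
  fix i assume "i < dim_vec (vec n (\<lambda>i. z $ \<pi> i))"
  then have i: "i < n" by simp
  have "\<pi> i < n"
    using p i by (meson lessThan_iff permutes_in_image)
  then have "(\<Sum>j<n. (if \<pi> i = j then 1 else 0) * z $ j) = z $ \<pi> i"
    by (rule sum_indicator_mult(2))
  then show "(perm_mat n \<pi> *\<^sub>v z) $ i = vec n (\<lambda>i. z $ \<pi> i) $ i"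
    using z i by (simp add: mult_mat_vec_def scalar_prod_def perm_mat_def lessThan_atLeast0)
qed (simp add: perm_mat_def)

lemma diag_of_carrier [simp]: "diag_of n d \<in> carrier_mat n n"
  by (simp add: diag_of_def)

lemma diag_of_transpose [simp]: "transpose_mat (diag_of n d) = diag_of n d"
  by (intro eq_matI) (auto simp: diag_of_def)

lemma diag_of_mult_index:
  assumes "A \<in> carrier_mat n m" "i < n" "j < m"
  shows "(diag_of n d * A) $$ (i, j) = d i * A $$ (i, j)"
proof -
  have "(diag_of n d * A) $$ (i, j) = (\<Sum>a<n. (if i = a then d i else 0) * A $$ (a, j))"
    using assms by (simp add: diag_of_def scalar_prod_def lessThan_atLeast0)
  also have "\<dots> = (\<Sum>a<n. if a = i then d i * A $$ (a, j) else 0)"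
    by (intro sum.cong) auto
  also have "\<dots> = d i * A $$ (i, j)"
    using assms(2) by simp
  finally show ?thesis .
qed

lemma mult_diag_of_index:
  assumes "A \<in> carrier_mat m n" "i < m" "j < n"
  shows "(A * diag_of n d) $$ (i, j) = A $$ (i, j) * d j"
proof -
  have "(A * diag_of n d) $$ (i, j) = (\<Sum>a<n. A $$ (i, a) * (if a = j then d a else 0))"
    using assms by (simp add: diag_of_def scalar_prod_def lessThan_atLeast0)
  also have "\<dots> = (\<Sum>a<n. if a = j then A $$ (i, a) * d j else 0)"
    by (intro sum.cong) auto
  also have "\<dots> = A $$ (i, j) * d j"
    using assms(3) by simp
  finally show ?thesis .
qed

lemma perm_mat_mult_diag_of:
  "perm_mat n \<pi> * diag_of n \<theta> = diag_of n (\<theta> \<circ> \<pi>) * perm_mat n \<pi>"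
proof (rule eq_matI)
  fix i j assume "i < dim_row (diag_of n (\<theta> \<circ> \<pi>) * perm_mat n \<pi>)"
    "j < dim_col (diag_of n (\<theta> \<circ> \<pi>) * perm_mat n \<pi>)"
  then have ij: "i < n" "j < n"
    by (auto simp: diag_of_def perm_mat_def)
  show "(perm_mat n \<pi> * diag_of n \<theta>) $$ (i, j) = (diag_of n (\<theta> \<circ> \<pi>) * perm_mat n \<pi>) $$ (i, j)"
    using mult_diag_of_index[OF perm_mat_carrier ij] diag_of_mult_index[OF perm_mat_carrier ij] ij
    by (simp add: perm_mat_def)
qed (auto simp: perm_mat_def diag_of_def)

lemma diag_of_mult_transpose_perm_mat:
  "diag_of n \<theta> * transpose_mat (perm_mat n \<pi>) = transpose_mat (perm_mat n \<pi>) * diag_of n (\<theta> \<circ> \<pi>)"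
proof -
  have "diag_of n \<theta> * transpose_mat (perm_mat n \<pi>) = transpose_mat (perm_mat n \<pi> * diag_of n \<theta>)"
    by (simp add: transpose_mult[of _ n n _ n])
  also have "\<dots> = transpose_mat (perm_mat n \<pi>) * diag_of n (\<theta> \<circ> \<pi>)"
    unfolding perm_mat_mult_diag_of by (simp add: transpose_mult[of _ n n _ n])
  finally show ?thesis .
qed

section \<open>Existence, uniqueness and permutation invariance of the minimiser\<close>

definition pair_penalty :: "nat \<Rightarrow> real vec \<Rightarrow> real" where
  "pair_penalty n x = (\<Sum>i<n. \<Sum>j\<in>{i<..<n}. \<bar>x $ i - x $ j\<bar>)"

lemma slope_obj_expand:
  "x \<in> carrier_vec n \<Longrightarrow> y \<in> carrier_vec n \<Longrightarrow>
   slope_obj n \<rho> y x = (\<Sum>i<n. (x $ i - y $ i)^2) / 2 + \<rho> * pair_penalty n x"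
  by (simp add: slope_obj_def sqnorm_def pair_penalty_def)

lemma sum_upper_triangle_symmetric:
  fixes f :: "nat \<Rightarrow> nat \<Rightarrow> real"
  assumes "\<And>i j. f i j = f j i" "\<And>i. f i i = 0"
  shows "(\<Sum>i<n. \<Sum>j<n. f i j) = 2 * (\<Sum>i<n. \<Sum>j\<in>{i<..<n}. f i j)"
proof (induction n)
  case (Suc n)
  have split: "{i<..<Suc n} = insert n {i<..<n}" if "i < n" for i
    using that by auto
  have empty: "{n<..<Suc n} = {}"
    by auto
  have "(\<Sum>j<n. f n j) = (\<Sum>i<n. f i n)"
    using assms(1) by metis
  then have "(\<Sum>i<Suc n. \<Sum>j<Suc n. f i j) = (\<Sum>i<n. \<Sum>j<n. f i j) + 2 * (\<Sum>i<n. f i n)"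
    using assms(2) by (simp add: sum.distrib)
  moreover have "(\<Sum>i<Suc n. \<Sum>j\<in>{i<..<Suc n}. f i j) = (\<Sum>i<n. (\<Sum>j\<in>{i<..<n}. f i j) + f i n)"
    using split empty by (simp add: add.commute)
  ultimately show ?case
    using Suc.IH by (simp add: sum.distrib algebra_simps)
qed simp

lemma pair_penalty_full_sum: "pair_penalty n x = (\<Sum>i<n. \<Sum>j<n. \<bar>x $ i - x $ j\<bar>) / 2"
  unfolding pair_penalty_def by (subst sum_upper_triangle_symmetric) auto

lemma pair_penalty_permute:
  assumes p: "\<sigma> permutes {..<n}"
  shows "pair_penalty n (vec n (\<lambda>i. x $ \<sigma> i)) = pair_penalty n x"
proof -
  have "(\<Sum>j<n. \<bar>x $ \<sigma> i - x $ \<sigma> j\<bar>) = (\<Sum>j<n. \<bar>x $ \<sigma> i - x $ j\<bar>)" for i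
    using sum.permute[OF p, of "\<lambda>j. \<bar>x $ \<sigma> i - x $ j\<bar>"] by (simp add: comp_def)
  then have "(\<Sum>i<n. \<Sum>j<n. \<bar>x $ \<sigma> i - x $ \<sigma> j\<bar>) = (\<Sum>i<n. \<Sum>j<n. \<bar>x $ \<sigma> i - x $ j\<bar>)"
    by simp
  also have "\<dots> = (\<Sum>i<n. \<Sum>j<n. \<bar>x $ i - x $ j\<bar>)"
    using sum.permute[OF p, of "\<lambda>i. \<Sum>j<n. \<bar>x $ i - x $ j\<bar>"] by (simp add: comp_def)
  finally show ?thesis
    unfolding pair_penalty_full_sum by simp
qed

lemma slope_obj_permute:
  assumes p: "\<sigma> permutes {..<n}" and "x \<in> carrier_vec n" "y \<in> carrier_vec n"
  shows "slope_obj n \<rho> (vec n (\<lambda>i. y $ \<sigma> i)) (vec n (\<lambda>i. x $ \<sigma> i)) = slope_obj n \<rho> y x"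
proof -
  have "(\<Sum>i<n. (x $ \<sigma> i - y $ \<sigma> i)^2) = (\<Sum>i<n. (x $ i - y $ i)^2)"
    using sum.permute[OF p, of "\<lambda>i. (x $ i - y $ i)^2"] by (simp add: comp_def)
  then show ?thesis
    using assms by (simp add: slope_obj_expand pair_penalty_permute[OF p])
qed

text \<open>The quadratic part is strictly convex and the penalty convex, so the midpoint of two
  distinct minimisers would be strictly better.\<close>

lemma slope_obj_min_unique:
  assumes r: "\<rho> \<ge> 0" and y: "y \<in> carrier_vec n"
    and a: "a \<in> carrier_vec n" and b: "b \<in> carrier_vec n"
    and a_min: "\<forall>z\<in>carrier_vec n. slope_obj n \<rho> y a \<le> slope_obj n \<rho> y z"
    and b_min: "\<forall>z\<in>carrier_vec n. slope_obj n \<rho> y b \<le> slope_obj n \<rho> y z"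
  shows "a = b"
proof -
  define m where "m = vec n (\<lambda>i. (a $ i + b $ i) / 2)"
  have m: "m \<in> carrier_vec n"
    by (simp add: m_def)
  have parallelogram: "4 * (\<Sum>i<n. (m $ i - y $ i)^2) = 2 * (\<Sum>i<n. (a $ i - y $ i)^2)
      + 2 * (\<Sum>i<n. (b $ i - y $ i)^2) - (\<Sum>i<n. (a $ i - b $ i)^2)"
  proof -
    have "(\<Sum>i<n. 4 * (m $ i - y $ i)^2)
        = (\<Sum>i<n. 2 * (a $ i - y $ i)^2 + 2 * (b $ i - y $ i)^2 - (a $ i - b $ i)^2)"
      by (intro sum.cong refl) (simp add: m_def power2_eq_square field_simps)
    then show ?thesis
      by (simp add: sum_subtractf sum_distrib_left sum.distrib)
  qed
  have "pair_penalty n m \<le> (\<Sum>i<n. \<Sum>j\<in>{i<..<n}. (\<bar>a $ i - a $ j\<bar> + \<bar>b $ i - b $ j\<bar>) / 2)"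
    unfolding pair_penalty_def
  proof (intro sum_mono)
    fix i j assume "i \<in> {..<n}" "j \<in> {i<..<n}"
    then have "m $ i - m $ j = ((a $ i - a $ j) + (b $ i - b $ j)) / 2"
      by (simp add: m_def field_simps)
    then have "\<bar>m $ i - m $ j\<bar> = \<bar>(a $ i - a $ j) + (b $ i - b $ j)\<bar> / 2"
      by (simp only: abs_divide abs_numeral)
    then show "\<bar>m $ i - m $ j\<bar> \<le> (\<bar>a $ i - a $ j\<bar> + \<bar>b $ i - b $ j\<bar>) / 2"
      using abs_triangle_ineq[of "a $ i - a $ j" "b $ i - b $ j"] by (metis divide_right_mono zero_le_numeral)
  qed
  also have "\<dots> = (pair_penalty n a + pair_penalty n b) / 2"
    by (simp add: pair_penalty_def sum.distrib add_divide_distrib flip: sum_divide_distrib)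
  finally have "\<rho> * pair_penalty n m \<le> \<rho> * ((pair_penalty n a + pair_penalty n b) / 2)"
    using r by (rule mult_left_mono)
  moreover have "slope_obj n \<rho> y a = slope_obj n \<rho> y b" "slope_obj n \<rho> y a \<le> slope_obj n \<rho> y m"
    using a_min b_min a b m by (auto intro: order_antisym)
  ultimately have "(\<Sum>i<n. (a $ i - b $ i)^2) \<le> 0"
    using parallelogram a b y m by (simp add: slope_obj_expand field_simps)
  then have "\<forall>i\<in>{..<n}. (a $ i - b $ i)^2 = 0"
    using sum_nonneg_eq_0_iff[of "{..<n}" "\<lambda>i. (a $ i - b $ i)^2"] by (simp add: order_antisym sum_nonneg)
  then show ?thesis
    using a b by (intro eq_vecI) auto
qed

lemma continuous_map_attains_min_bounded_sublevel:
  fixes f :: "(nat \<Rightarrow> real) \<Rightarrow> real"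
  assumes cont: "continuous_map (product_topology (\<lambda>_. euclideanreal) {..<n}) euclideanreal f"
    and a: "a \<in> extensional {..<n}"
    and bounded: "\<And>z. z \<in> extensional {..<n} \<Longrightarrow> f z \<le> f a \<Longrightarrow> \<forall>i<n. \<bar>z i\<bar> \<le> r"
  shows "\<exists>x\<in>extensional {..<n}. \<forall>z\<in>extensional {..<n}. f x \<le> f z"
proof -
  let ?C = "PiE {..<n} (\<lambda>_. {-r..r})"
  have aC: "a \<in> ?C"
    using bounded[OF a order_refl] a by (auto simp: PiE_def Pi_def abs_le_iff)
  have "compactin (product_topology (\<lambda>_. euclideanreal) {..<n}) ?C"
    by (subst compactin_PiE) auto
  then have "compact (f ` ?C)"
    using image_compactin[OF _ cont] by simp
  then obtain x where x: "x \<in> ?C" "\<forall>t\<in>f ` ?C. f x \<le> t"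
    using compact_attains_inf[of "f ` ?C"] aC by blast
  show ?thesis
  proof (intro bexI ballI)
    fix z :: "nat \<Rightarrow> real" assume z: "z \<in> extensional {..<n}"
    show "f x \<le> f z"
    proof (cases "f z \<le> f a")
      case True
      then have "z \<in> ?C"
        using bounded[OF z] z by (auto simp: PiE_def Pi_def abs_le_iff)
      then show ?thesis using x by auto
    qed (use x aC in force)
  qed (use x in \<open>auto simp: PiE_def\<close>)
qed

lemma abs_le_one_plus_square: "\<bar>t :: real\<bar> \<le> 1 + t^2"
  using zero_le_power2[of "\<bar>t\<bar> - 1"] by (simp add: power2_eq_square algebra_simps)

lemma slope_obj_min_exists:
  assumes r: "\<rho> \<ge> 0" and y: "y \<in> carrier_vec n"
  shows "\<exists>x\<in>carrier_vec n. \<forall>z\<in>carrier_vec n. slope_obj n \<rho> y x \<le> slope_obj n \<rho> y z"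
proof -
  define f where "f = (\<lambda>z::nat \<Rightarrow> real. (\<Sum>i<n. (z i - y $ i)^2) / 2
      + \<rho> * (\<Sum>i<n. \<Sum>j\<in>{i<..<n}. \<bar>z i - z j\<bar>))"
  have f_vec: "f z = slope_obj n \<rho> y (vec n z)" for z
    using y by (simp add: slope_obj_expand f_def pair_penalty_def)
  have cont: "continuous_map (product_topology (\<lambda>_. euclideanreal) {..<n}) euclideanreal f"
    unfolding f_def by (intro continuous_intros continuous_map_product_projection) auto
  define a where "a = restrict (\<lambda>i. y $ i) {..<n}"
  have fa: "f a = \<rho> * pair_penalty n y"
    by (simp add: f_def a_def pair_penalty_def)
  define bound where "bound = (\<Sum>i<n. \<bar>y $ i\<bar>) + 2 * \<rho> * pair_penalty n y + 1"
  have bounded: "\<forall>i<n. \<bar>z i\<bar> \<le> bound" if "f z \<le> f a" for z :: "nat \<Rightarrow> real"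
  proof (intro allI impI)
    fix i assume i: "i < n"
    have "(z i - y $ i)^2 \<le> (\<Sum>k<n. (z k - y $ k)^2)"
      using i by (intro member_le_sum) auto
    moreover have "0 \<le> \<rho> * (\<Sum>i<n. \<Sum>j\<in>{i<..<n}. \<bar>z i - z j\<bar>)"
      using r by (intro mult_nonneg_nonneg sum_nonneg) auto
    ultimately have "(z i - y $ i)^2 \<le> 2 * \<rho> * pair_penalty n y"
      using that fa unfolding f_def by linarith
    moreover have "\<bar>z i - y $ i\<bar> \<le> 1 + (z i - y $ i)^2"
      by (rule abs_le_one_plus_square)
    moreover have "\<bar>y $ i\<bar> \<le> (\<Sum>k<n. \<bar>y $ k\<bar>)"
      using i by (intro member_le_sum) auto
    ultimately show "\<bar>z i\<bar> \<le> bound"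
      unfolding bound_def by linarith
  qed
  obtain x where x: "\<forall>z\<in>extensional {..<n}. f x \<le> f z"
    using continuous_map_attains_min_bounded_sublevel[OF cont, of a bound] bounded by (auto simp: a_def)
  show ?thesis
  proof (intro bexI ballI)
    fix z :: "real vec" assume z: "z \<in> carrier_vec n"
    have "vec n (restrict (\<lambda>i. z $ i) {..<n}) = z"
      using z by (intro eq_vecI) auto
    then show "slope_obj n \<rho> y (vec n x) \<le> slope_obj n \<rho> y z"
      using x f_vec by (metis restrict_extensional)
  qed simp
qed

lemma S_prox_minimises:
  assumes "\<rho> \<ge> 0" "y \<in> carrier_vec n"
  shows "S_prox n \<rho> y \<in> carrier_vec n"
    and "\<forall>z\<in>carrier_vec n. slope_obj n \<rho> y (S_prox n \<rho> y) \<le> slope_obj n \<rho> y z"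
proof -
  have "\<exists>!x. x \<in> carrier_vec n \<and> (\<forall>z\<in>carrier_vec n. slope_obj n \<rho> y x \<le> slope_obj n \<rho> y z)"
    using slope_obj_min_exists[OF assms] slope_obj_min_unique[OF assms] by blast
  from theI'[OF this] show "S_prox n \<rho> y \<in> carrier_vec n"
    and "\<forall>z\<in>carrier_vec n. slope_obj n \<rho> y (S_prox n \<rho> y) \<le> slope_obj n \<rho> y z"
    unfolding S_prox_def by auto
qed

lemma S_prox_eqI:
  assumes "\<rho> \<ge> 0" "y \<in> carrier_vec n" "x \<in> carrier_vec n"
    and "\<forall>z\<in>carrier_vec n. slope_obj n \<rho> y x \<le> slope_obj n \<rho> y z"
  shows "S_prox n \<rho> y = x"
  using slope_obj_min_unique[of \<rho> y n "S_prox n \<rho> y" x] S_prox_minimises[OF assms(1,2)] assms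
  by blast

lemma S_prox_permute:
  assumes r: "\<rho> \<ge> 0" and y: "y \<in> carrier_vec n" and p: "\<pi> permutes {..<n}" and i: "i < n"
  shows "S_prox n \<rho> y $ \<pi> i = S_prox n \<rho> (vec n (\<lambda>i. y $ \<pi> i)) $ i"
proof -
  define u where "u = vec n (\<lambda>i. y $ \<pi> i)"
  define m where "m = S_prox n \<rho> u"
  have u: "u \<in> carrier_vec n"
    by (simp add: u_def)
  note m = S_prox_minimises[OF r u, folded m_def]
  define x where "x = vec n (\<lambda>i. m $ inv_into UNIV \<pi> i)"
  have x: "x \<in> carrier_vec n"
    by (simp add: x_def)
  have \<pi>_less: "\<pi> i < n" if "i < n" for i
    using p that by (meson lessThan_iff permutes_in_image)
  have m_eq: "vec n (\<lambda>i. x $ \<pi> i) = m"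
    using m(1) \<pi>_less by (intro eq_vecI) (auto simp: x_def permutes_inverses(2)[OF p])
  have "slope_obj n \<rho> y x \<le> slope_obj n \<rho> y z" if z: "z \<in> carrier_vec n" for z
  proof -
    have "slope_obj n \<rho> y x = slope_obj n \<rho> u m"
      using slope_obj_permute[OF p x y] by (simp add: m_eq u_def)
    also have "\<dots> \<le> slope_obj n \<rho> u (vec n (\<lambda>i. z $ \<pi> i))"
      using m(2) by simp
    also have "\<dots> = slope_obj n \<rho> y z"
      using slope_obj_permute[OF p z y] by (simp add: u_def)
    finally show ?thesis .
  qed
  then have "S_prox n \<rho> y = x"
    using S_prox_eqI[OF r y x] by blast
  then show ?thesis
    using i \<pi>_less[OF i] by (simp add: x_def u_def m_def permutes_inverses(2)[OF p])
qed

section \<open>Sorted data: the minimiser is a projection onto the monotone cone\<close>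

lemma Dcone_carrier: "z \<in> Dcone n \<Longrightarrow> z \<in> carrier_vec n"
  by (simp add: Dcone_def)

lemma Dcone_antimono:
  assumes z: "z \<in> Dcone n" and "i \<le> j" "j < n"
  shows "z $ j \<le> z $ i"
  using assms(2,3)
proof (induction j)
  case (Suc j)
  then show ?case
    using z by (cases "i = Suc j") (auto simp: Dcone_def intro: order_trans)
qed simp

lemma S_prox_in_Dcone:
  assumes r: "\<rho> \<ge> 0" and u: "u \<in> carrier_vec n" and sorted: "nonincreasing_vec u"
  shows "S_prox n \<rho> u \<in> Dcone n"
proof -
  let ?z = "S_prox n \<rho> u"
  note z = S_prox_minimises[OF r u]
  have "?z $ (k + 1) \<le> ?z $ k" if k: "k + 1 < n" for k
  proof (rule ccontr)
    assume inverted: "\<not> ?z $ (k + 1) \<le> ?z $ k"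
    define \<sigma> where "\<sigma> = Transposition.transpose k (Suc k)"
    have \<sigma>: "\<sigma> permutes {..<n}"
      unfolding \<sigma>_def using k by (intro permutes_swap_id) auto
    define z' where "z' = vec n (\<lambda>i. ?z $ \<sigma> i)"
    have z': "z' \<in> carrier_vec n"
      by (simp add: z'_def)
    have "(\<Sum>i<n. (z' $ i - u $ i)^2) - (\<Sum>i<n. (?z $ i - u $ i)^2)
        = (\<Sum>i\<in>{k, Suc k}. (z' $ i - u $ i)^2 - (?z $ i - u $ i)^2)"
      unfolding sum_subtractf[symmetric] using k
      by (intro sum.mono_neutral_right) (auto simp: z'_def \<sigma>_def)
    also have "\<dots> = 2 * ((?z $ k - ?z $ Suc k) * (u $ k - u $ Suc k))"
      using k by (simp add: z'_def \<sigma>_def power2_eq_square algebra_simps)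
    also have "\<dots> \<le> 0"
      using sorted k u inverted
      by (intro mult_nonneg_nonpos[of 2, simplified] mult_nonpos_nonneg)
        (auto simp: nonincreasing_vec_def)
    finally have "slope_obj n \<rho> u z' \<le> slope_obj n \<rho> u ?z"
      using z' z(1) u by (simp add: slope_obj_expand z'_def pair_penalty_permute[OF \<sigma>])
    then have "S_prox n \<rho> u = z'"
      using S_prox_eqI[OF r u z'] z(2) by force
    then have "z' $ k = ?z $ k"
      by simp
    then have "?z $ Suc k = ?z $ k"
      using k by (simp add: z'_def \<sigma>_def)
    then show False
      using inverted by simp
  qed
  then show ?thesis
    using z(1) by (auto simp: Dcone_def)
qed

lemma sum_pairs_diff_weighted:
  fixes a :: "nat \<Rightarrow> real"
  shows "(\<Sum>i<n. \<Sum>j\<in>{i<..<n}. a i - a j) = (\<Sum>i<n. (real n - 2 * real (i + 1) + 1) * a i)"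
proof (induction n)
  case (Suc n)
  have split: "{i<..<Suc n} = insert n {i<..<n}" if "i < n" for i
    using that by auto
  have empty: "{n<..<Suc n} = {}"
    by auto
  have "(\<Sum>i<Suc n. \<Sum>j\<in>{i<..<Suc n}. a i - a j) = (\<Sum>i<n. (\<Sum>j\<in>{i<..<n}. a i - a j) + (a i - a n))"
    using split empty by (simp add: add.commute)
  also have "\<dots> = (\<Sum>i<n. (real n - 2 * real (i + 1) + 1) * a i) + (\<Sum>i<n. a i) - real n * a n"
    using Suc.IH by (simp add: sum.distrib sum_subtractf)
  also have "\<dots> = (\<Sum>i<n. (real n - 2 * real (i + 1) + 1) * a i + a i) - real n * a n"
    by (simp add: sum.distrib)
  also have "\<dots> = (\<Sum>i<Suc n. (real (Suc n) - 2 * real (i + 1) + 1) * a i)"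
    by (simp add: algebra_simps)
  finally show ?case .
qed simp

lemma slope_obj_on_Dcone:
  assumes z: "z \<in> Dcone n" and u: "u \<in> carrier_vec n"
  shows "slope_obj n \<rho> u z = sqnorm (z - (u - \<rho> \<cdot>\<^sub>v wvec n)) / 2
      + (\<rho> * (\<Sum>i<n. wvec n $ i * u $ i) - \<rho>^2 * (\<Sum>i<n. (wvec n $ i)^2) / 2)"
proof -
  have zc: "z \<in> carrier_vec n"
    using z by (rule Dcone_carrier)
  have "pair_penalty n z = (\<Sum>i<n. \<Sum>j\<in>{i<..<n}. z $ i - z $ j)"
    unfolding pair_penalty_def using Dcone_antimono[OF z] by (intro sum.cong) auto
  also have "\<dots> = (\<Sum>i<n. wvec n $ i * z $ i)"
    by (subst sum_pairs_diff_weighted) (auto simp: wvec_def intro: sum.cong)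
  finally have penalty: "pair_penalty n z = (\<Sum>i<n. wvec n $ i * z $ i)" .
  have "sqnorm (z - (u - \<rho> \<cdot>\<^sub>v wvec n)) = (\<Sum>i<n. (z $ i - (u $ i - \<rho> * wvec n $ i))^2)"
    using zc u by (simp add: sqnorm_def wvec_def)
  also have "\<dots> = (\<Sum>i<n. (z $ i - u $ i)^2 + 2 * \<rho> * (wvec n $ i * z $ i)
      - 2 * \<rho> * (wvec n $ i * u $ i) + \<rho>^2 * (wvec n $ i)^2)"
    by (intro sum.cong refl) (simp add: power2_eq_square algebra_simps)
  also have "\<dots> = (\<Sum>i<n. (z $ i - u $ i)^2) + 2 * \<rho> * (\<Sum>i<n. wvec n $ i * z $ i)
      - 2 * \<rho> * (\<Sum>i<n. wvec n $ i * u $ i) + \<rho>^2 * (\<Sum>i<n. (wvec n $ i)^2)"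
    by (simp add: sum.distrib sum_subtractf sum_distrib_left)
  finally show ?thesis
    using zc u penalty by (simp add: slope_obj_expand field_simps)
qed

lemma S_prox_projects_onto_Dcone:
  assumes r: "\<rho> \<ge> 0" and u: "u \<in> carrier_vec n" and "nonincreasing_vec u"
  shows "\<forall>z\<in>Dcone n. sqnorm (S_prox n \<rho> u - (u - \<rho> \<cdot>\<^sub>v wvec n))
                     \<le> sqnorm (z - (u - \<rho> \<cdot>\<^sub>v wvec n))"
proof
  fix z assume z: "z \<in> Dcone n"
  have "slope_obj n \<rho> u (S_prox n \<rho> u) \<le> slope_obj n \<rho> u z"
    using S_prox_minimises(2)[OF r u] Dcone_carrier[OF z] by blast
  then show "sqnorm (S_prox n \<rho> u - (u - \<rho> \<cdot>\<^sub>v wvec n)) \<le> sqnorm (z - (u - \<rho> \<cdot>\<^sub>v wvec n))"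
    using slope_obj_on_Dcone[OF S_prox_in_Dcone[OF assms] u] slope_obj_on_Dcone[OF z u] by simp
qed

text \<open>Every projection of u - \<rho> w onto D also minimises the objective, so the projection
  inherits uniqueness from the minimiser.\<close>

lemma projD_eq_S_prox:
  assumes r: "\<rho> \<ge> 0" and u: "u \<in> carrier_vec n" and "nonincreasing_vec u"
  shows "projD n (u - \<rho> \<cdot>\<^sub>v wvec n) = S_prox n \<rho> u"
  unfolding projD_def
proof (rule the_equality)
  show "S_prox n \<rho> u \<in> Dcone n \<and> (\<forall>z\<in>Dcone n. sqnorm (S_prox n \<rho> u - (u - \<rho> \<cdot>\<^sub>v wvec n))
      \<le> sqnorm (z - (u - \<rho> \<cdot>\<^sub>v wvec n)))"
    using S_prox_in_Dcone[OF assms] S_prox_projects_onto_Dcone[OF assms] by blast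
next
  fix x assume x: "x \<in> Dcone n \<and> (\<forall>z\<in>Dcone n. sqnorm (x - (u - \<rho> \<cdot>\<^sub>v wvec n))
      \<le> sqnorm (z - (u - \<rho> \<cdot>\<^sub>v wvec n)))"
  then have "slope_obj n \<rho> u x \<le> slope_obj n \<rho> u z" if "z \<in> carrier_vec n" for z
    using S_prox_minimises(2)[OF r u] S_prox_in_Dcone[OF assms] that
    by (fastforce simp: slope_obj_on_Dcone[OF _ u] intro: order_trans)
  then show "x = S_prox n \<rho> u"
    using S_prox_eqI[OF r u] x Dcone_carrier by (metis (no_types))
qed

section \<open>The multiplier of the projection onto the monotone cone\<close>

text \<open>First-order optimality along a feasible direction d: the quadratic term of the expansion
  is dominated by the linear one for small steps.\<close>

lemma Dcone_projection_direction:
  assumes x: "x \<in> Dcone n" and v: "v \<in> carrier_vec n"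
    and x_min: "\<forall>z\<in>Dcone n. sqnorm (x - v) \<le> sqnorm (z - v)"
    and "\<epsilon> > 0"
    and feasible: "\<And>t. 0 < t \<Longrightarrow> t \<le> \<epsilon> \<Longrightarrow> vec n (\<lambda>i. x $ i + t * d i) \<in> Dcone n"
  shows "0 \<le> (\<Sum>i<n. (x $ i - v $ i) * d i)"
proof (rule ccontr)
  define a where "a = (\<Sum>i<n. (x $ i - v $ i) * d i)"
  define Q where "Q = (\<Sum>i<n. (d i)^2)"
  assume "\<not> 0 \<le> (\<Sum>i<n. (x $ i - v $ i) * d i)"
  then have a: "a < 0"
    unfolding a_def by simp
  have Q: "Q \<ge> 0"
    unfolding Q_def by (intro sum_nonneg) auto
  define t where "t = min \<epsilon> (- a / (Q + 1))"
  have t: "0 < t" "t \<le> \<epsilon>"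
    using a Q \<open>\<epsilon> > 0\<close> by (auto simp: t_def divide_neg_pos)
  have "sqnorm (vec n (\<lambda>i. x $ i + t * d i) - v) = (\<Sum>i<n. (x $ i + t * d i - v $ i)^2)"
    using v by (simp add: sqnorm_def)
  also have "\<dots> = (\<Sum>i<n. (x $ i - v $ i)^2 + 2 * t * ((x $ i - v $ i) * d i) + t^2 * (d i)^2)"
    by (intro sum.cong refl) (simp add: power2_eq_square algebra_simps)
  also have "\<dots> = sqnorm (x - v) + 2 * t * a + t^2 * Q"
    using Dcone_carrier[OF x] v by (simp add: sqnorm_def sum.distrib sum_distrib_left a_def Q_def)
  finally have "0 \<le> t * (2 * a + t * Q)"
    using x_min feasible[OF t] by (force simp: power2_eq_square algebra_simps)
  then have "0 \<le> 2 * a + t * Q"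
    using t by (simp add: zero_le_mult_iff)
  moreover have "t * Q \<le> - a * (Q / (Q + 1))"
    using Q mult_right_mono[of t "- a / (Q + 1)" Q] by (simp add: t_def)
  moreover have "- a * (Q / (Q + 1)) \<le> - a"
    using a Q by (intro mult_left_le) auto
  ultimately show False
    using a by linarith
qed

lemma sum_prefix_indicator:
  fixes f :: "nat \<Rightarrow> real"
  assumes "k < n"
  shows "(\<Sum>i<n. f i * (if i \<le> k then c else 0)) = c * (\<Sum>i\<le>k. f i)"
proof -
  have "(\<Sum>i<n. f i * (if i \<le> k then c else 0)) = (\<Sum>i<n. if i \<le> k then c * f i else 0)"
    by (intro sum.cong) auto
  also have "\<dots> = (\<Sum>i\<in>{..<n} \<inter> {i. i \<le> k}. c * f i)"
    by (simp add: sum.inter_restrict)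
  also have "{..<n} \<inter> {i. i \<le> k} = {..k}"
    using assms by auto
  finally show ?thesis
    by (simp add: sum_distrib_left)
qed

text \<open>Shifting the whole vector, and lowering or raising a prefix, are feasible directions.\<close>

lemma Dcone_projection_prefix_sums:
  assumes x: "x \<in> Dcone n" and v: "v \<in> carrier_vec n"
    and x_min: "\<forall>z\<in>Dcone n. sqnorm (x - v) \<le> sqnorm (z - v)"
  shows "(\<Sum>i<n. v $ i - x $ i) = 0"
    and "k < n - 1 \<Longrightarrow> 0 \<le> (\<Sum>i\<le>k. x $ i - v $ i)"
    and "k < n - 1 \<Longrightarrow> x $ k \<noteq> x $ (k + 1) \<Longrightarrow> (\<Sum>i\<le>k. x $ i - v $ i) \<le> 0"
proof -
  have x_step: "x $ (i + 1) \<le> x $ i" if "i + 1 < n" for i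
    using x that by (auto simp: Dcone_def)
  show "(\<Sum>i<n. v $ i - x $ i) = 0"
    using Dcone_projection_direction[OF x v x_min, of 1 "\<lambda>_. 1"]
      Dcone_projection_direction[OF x v x_min, of 1 "\<lambda>_. -1"] x_step Dcone_carrier[OF x]
    by (force simp: Dcone_def sum_subtractf sum_negf)
  assume k: "k < n - 1"
  then show "0 \<le> (\<Sum>i\<le>k. x $ i - v $ i)"
    using Dcone_projection_direction[OF x v x_min, of 1 "\<lambda>i. if i \<le> k then 1 else 0"]
      x_step sum_prefix_indicator[of k n "\<lambda>i. x $ i - v $ i" 1]
    by (fastforce simp: Dcone_def)
  assume "x $ k \<noteq> x $ (k + 1)"
  moreover have "k + 1 < n"
    using k by simp
  ultimately have "x $ (k + 1) < x $ k"
    using x_step by (simp add: order.strict_iff_order)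
  moreover have "vec n (\<lambda>i. x $ i + t * (if i \<le> k then -1 else 0)) \<in> Dcone n"
    if "t \<le> x $ k - x $ (k + 1)" for t
    using that x_step by (auto simp: Dcone_def intro: order_trans[OF _ x_step] le_SucE)
  ultimately have "0 \<le> (\<Sum>i<n. (x $ i - v $ i) * (if i \<le> k then -1 else 0))"
    by (intro Dcone_projection_direction[OF x v x_min, of "x $ k - x $ (k + 1)"]) auto
  then show "(\<Sum>i\<le>k. x $ i - v $ i) \<le> 0"
    using sum_prefix_indicator[of k n "\<lambda>i. x $ i - v $ i" "-1"] k by simp
qed

lemma Dcone_projection_multiplier:
  assumes x: "x \<in> Dcone n" and v: "v \<in> carrier_vec n"
    and x_min: "\<forall>z\<in>Dcone n. sqnorm (x - v) \<le> sqnorm (z - v)"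
  defines "lam \<equiv> vec (n - 1) (\<lambda>k. \<Sum>i\<le>k. v $ i - x $ i)"
  shows "x - v + transpose_mat (Bmat n) *\<^sub>v lam = 0\<^sub>v n"
    and "\<forall>k<n-1. lam $ k \<le> 0"
    and "\<forall>k<n-1. x $ k \<noteq> x $ (k + 1) \<longrightarrow> lam $ k = 0"
proof -
  note sums = Dcone_projection_prefix_sums[OF x v x_min]
  have lam_k: "lam $ k = - (\<Sum>i\<le>k. x $ i - v $ i)" if "k < n - 1" for k
    using that by (simp add: lam_def sum_negf[symmetric])
  show "\<forall>k<n-1. lam $ k \<le> 0"
    using sums(2) lam_k by fastforce
  show "\<forall>k<n-1. x $ k \<noteq> x $ (k + 1) \<longrightarrow> lam $ k = 0"
    using sums(2,3) lam_k by (metis neg_equal_zero order_antisym)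
  show "x - v + transpose_mat (Bmat n) *\<^sub>v lam = 0\<^sub>v n"
  proof (rule eq_vecI)
    fix j assume "j < dim_vec (0\<^sub>v n :: real vec)"
    then have j: "j < n" by simp
    have "x $ j - v $ j + (if j < n - 1 then lam $ j else 0) - (if 0 < j then lam $ (j - 1) else 0) = 0"
    proof (cases "j < n - 1")
      case True
      then show ?thesis
        by (cases j) (simp_all add: lam_def)
    next
      case False
      then have n: "n = Suc j"
        using j by simp
      then have "(\<Sum>i<j. v $ i - x $ i) = x $ j - v $ j"
        using sums(1) by simp
      then show ?thesis
        using False n by (cases j) (simp_all add: lam_def lessThan_Suc_atMost)
    qed
    then show "(x - v + transpose_mat (Bmat n) *\<^sub>v lam) $ j = 0\<^sub>v n $ j"
      using transpose_Bmat_mult_vec[of lam n j] j Dcone_carrier[OF x] v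
      by (simp add: lam_def Bmat_def)
  qed (use Dcone_carrier[OF x] in \<open>simp add: Bmat_def\<close>)
qed

section \<open>Active rows of B\<close>

definition sel_mat :: "nat \<Rightarrow> nat set \<Rightarrow> real mat" where
  "sel_mat n K = mat (n - 1) (card K) (\<lambda>(a, b). if a = pick K b then 1 else 0)"

lemma sel_mat_carrier [simp]: "sel_mat n K \<in> carrier_mat (n - 1) (card K)"
  by (simp add: sel_mat_def)

lemma sel_mat_carrier_Suc [simp]: "sel_mat n K \<in> carrier_mat (n - Suc 0) (card K)"
  using sel_mat_carrier[of n K] by simp

lemma pick_less:
  assumes "K \<subseteq> {..<m}" "b < card K"
  shows "pick K b \<in> K" "pick K b < m"
  using pick_in_set[of b K] assms by auto

lemma pick_inj:
  assumes "b < card K" "b' < card K" "pick K b = pick K b'"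
  shows "b = b'"
  using pick_mono[of b K b'] pick_mono[of b' K b] assms by (metis less_linear less_irrefl)

lemma card_Brows_rows:
  assumes "K \<subseteq> {..<n-1}"
  shows "card {i. i < n - 1 \<and> i \<in> K} = card K"
proof -
  have "{i. i < n - 1 \<and> i \<in> K} = K"
    using assms by auto
  then show ?thesis
    by simp
qed

lemma Brows_index:
  assumes K: "K \<subseteq> {..<n-1}" and b: "b < card K" and j: "j < n"
  shows "Brows n K $$ (b, j) = Bmat n $$ (pick K b, j)"
proof -
  have "{a \<in> {..<n}. a < j} = {..<j}"
    using j by auto
  then have "pick {..<n} j = j"
    using pick_card_in_set[of j "{..<n}"] j by simp
  then show ?thesis
    unfolding Brows_def using b j card_Brows_rows[OF K]
    by (subst submatrix_index) (auto simp: Bmat_def)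
qed

lemma pick_onto:
  assumes "finite K" "a \<in> K"
  shows "\<exists>b<card K. pick K b = a"
proof
  have "{x\<in>K. x < a} \<subset> K"
    using assms(2) by auto
  then show "card {x\<in>K. x < a} < card K \<and> pick K (card {x\<in>K. x < a}) = a"
    using assms by (simp add: psubset_card_mono pick_card_in_set)
qed

lemma Brows_eq_sel_mat:
  assumes K: "K \<subseteq> {..<n-1}"
  shows "Brows n K = transpose_mat (sel_mat n K) * Bmat n"
proof (rule eq_matI)
  show "dim_row (Brows n K) = dim_row (transpose_mat (sel_mat n K) * Bmat n)"
    "dim_col (Brows n K) = dim_col (transpose_mat (sel_mat n K) * Bmat n)"
    using card_Brows_rows[OF K] by (simp_all add: Brows_def dim_submatrix Bmat_def sel_mat_def)
  fix b j assume "b < dim_row (transpose_mat (sel_mat n K) * Bmat n)"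
    "j < dim_col (transpose_mat (sel_mat n K) * Bmat n)"
  then have b: "b < card K" and j: "j < n"
    by (simp_all add: sel_mat_def Bmat_def)
  have "(transpose_mat (sel_mat n K) * Bmat n) $$ (b, j)
      = (\<Sum>a<n-1. (if a = pick K b then 1 else 0) * Bmat n $$ (a, j))"
    using b j by (simp add: sel_mat_def Bmat_def scalar_prod_def lessThan_atLeast0)
  also have "\<dots> = Bmat n $$ (pick K b, j)"
    by (rule sum_indicator_mult(1)[OF pick_less(2)[OF K b]])
  also have "\<dots> = Brows n K $$ (b, j)"
    using Brows_index[OF K b j] ..
  finally show "Brows n K $$ (b, j) = (transpose_mat (sel_mat n K) * Bmat n) $$ (b, j)" ..
qed

lemma transpose_sel_mat_mult:
  assumes K: "K \<subseteq> {..<n-1}"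
  shows "transpose_mat (sel_mat n K) * sel_mat n K = 1\<^sub>m (card K)"
proof (rule eq_matI)
  fix b b' assume "b < dim_row (1\<^sub>m (card K) :: real mat)" "b' < dim_col (1\<^sub>m (card K) :: real mat)"
  then have bb: "b < card K" "b' < card K" by auto
  have "(transpose_mat (sel_mat n K) * sel_mat n K) $$ (b, b')
      = (\<Sum>a<n-1. (if a = pick K b then 1 else 0) * (if a = pick K b' then 1 else 0))"
    using bb by (simp add: sel_mat_def scalar_prod_def lessThan_atLeast0)
  also have "\<dots> = (if pick K b = pick K b' then 1 else 0)"
    by (rule sum_indicator_mult(1)[OF pick_less(2)[OF K bb(1)]])
  finally show "(transpose_mat (sel_mat n K) * sel_mat n K) $$ (b, b') = 1\<^sub>m (card K) $$ (b, b')"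
    using bb pick_inj[OF bb] by auto
qed (auto simp: sel_mat_def)

lemma sel_mat_mult_transpose:
  assumes K: "K \<subseteq> {..<n-1}"
  shows "sel_mat n K * transpose_mat (sel_mat n K) = diag_of (n - 1) (\<lambda>i. if i \<in> K then 1 else 0)"
proof (rule eq_matI)
  fix a a' assume "a < dim_row (diag_of (n - 1) (\<lambda>i. if i \<in> K then 1 else 0))"
    "a' < dim_col (diag_of (n - 1) (\<lambda>i. if i \<in> K then 1 else 0))"
  then have aa: "a < n - 1" "a' < n - 1"
    by (auto simp: diag_of_def)
  have "(sel_mat n K * transpose_mat (sel_mat n K)) $$ (a, a')
      = (\<Sum>b<card K. (if a = pick K b then 1 else 0) * (if a' = pick K b then 1 else 0))"
    using aa by (simp add: sel_mat_def scalar_prod_def lessThan_atLeast0)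
  also have "\<dots> = (if a \<in> K \<and> a = a' then 1 else 0)"
  proof (cases "a \<in> K")
    case True
    moreover have "finite K"
      using K by (rule finite_subset) simp
    ultimately obtain b0 where b0: "b0 < card K" and pick_b0: "pick K b0 = a"
      using pick_onto by blast
    have pick_eq_iff: "a = pick K b \<longleftrightarrow> b = b0" if "b < card K" for b
      using pick_inj[OF that b0] pick_b0 by metis
    have "(\<Sum>b<card K. (if a = pick K b then 1 else 0) * (if a' = pick K b then 1 else (0::real)))
        = (\<Sum>b<card K. (if b = b0 then 1 else 0) * (if a' = a then 1 else 0))"
    proof (intro sum.cong refl)
      fix b assume "b \<in> {..<card K}"
      then show "(if a = pick K b then 1 else 0) * (if a' = pick K b then 1 else (0::real))
          = (if b = b0 then 1 else 0) * (if a' = a then 1 else 0)"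
        using pick_eq_iff[of b] pick_b0 by (cases "b = b0") simp_all
    qed
    also have "\<dots> = (if a' = a then 1 else 0)"
      by (rule sum_indicator_mult(1)[OF b0])
    finally show ?thesis
      using True by simp
  next
    case False
    have "a \<noteq> pick K b" if "b < card K" for b
      using pick_less(1)[OF K that] False by blast
    then have "(\<Sum>b<card K. (if a = pick K b then 1 else 0) * (if a' = pick K b then 1 else (0::real))) = 0"
      by (intro sum.neutral ballI) simp
    then show ?thesis
      using False by simp
  qed
  also have "\<dots> = diag_of (n - 1) (\<lambda>i. if i \<in> K then 1 else 0) $$ (a, a')"
    using aa by (simp add: diag_of_def)
  finally show "(sel_mat n K * transpose_mat (sel_mat n K)) $$ (a, a')
      = diag_of (n - 1) (\<lambda>i. if i \<in> K then 1 else 0) $$ (a, a')" .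
qed (auto simp: sel_mat_def diag_of_def)

lemma Brows_carrier:
  assumes "K \<subseteq> {..<n-1}"
  shows "Brows n K \<in> carrier_mat (card K) n"
  unfolding Brows_eq_sel_mat[OF assms] by (rule mult_carrier_mat[of _ _ "n - 1"]) simp_all

lemma Brows_full_row_rank:
  assumes K: "K \<subseteq> {..<n-1}"
  shows "full_row_rank (Brows n K)"
  unfolding full_row_rank_def
proof (intro ballI impI)
  let ?E = "sel_mat n K" and ?B = "Bmat n"
  have BK: "Brows n K \<in> carrier_mat (card K) n"
    by (rule Brows_carrier[OF K])
  fix c assume "c \<in> carrier_vec (dim_row (Brows n K))"
    and zero: "transpose_mat (Brows n K) *\<^sub>v c = 0\<^sub>v (dim_col (Brows n K))"
  then have c: "c \<in> carrier_vec (card K)"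
    using BK by simp
  have "transpose_mat (Brows n K) = transpose_mat ?B * ?E"
    unfolding Brows_eq_sel_mat[OF K] by (subst transpose_mult[of _ "card K" "n-1" _ n]) auto
  then have "transpose_mat ?B *\<^sub>v (?E *\<^sub>v c) = 0\<^sub>v n"
    using zero BK c by (simp add: assoc_mult_mat_vec[of _ n "n-1" _ "card K"])
  then have "?E *\<^sub>v c = 0\<^sub>v (n - 1)"
    by (rule transpose_Bmat_mult_vec_eq_0[OF mult_mat_vec_carrier[OF sel_mat_carrier c]])
  then have "transpose_mat ?E *\<^sub>v (?E *\<^sub>v c) = 0\<^sub>v (card K)"
    by (intro eq_vecI) (auto simp: sel_mat_def)
  moreover have "transpose_mat ?E *\<^sub>v (?E *\<^sub>v c) = c"
    using transpose_sel_mat_mult[OF K] c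
    by (simp flip: assoc_mult_mat_vec[of _ "card K" "n-1" _ "card K"])
  ultimately show "c = 0\<^sub>v (dim_row (Brows n K))"
    using BK by simp
qed

lemma ID_mem_KD:
  assumes x: "projD n v \<in> Dcone n" and v: "v \<in> carrier_vec n"
    and x_min: "\<forall>z\<in>Dcone n. sqnorm (projD n v - v) \<le> sqnorm (z - v)"
  shows "ID n v \<in> KD n v"
proof -
  let ?x = "projD n v"
  define lam where "lam = vec (n - 1) (\<lambda>k. \<Sum>i\<le>k. v $ i - ?x $ i)"
  note mult = Dcone_projection_multiplier[OF x v x_min, folded lam_def]
  have Bx: "(Bmat n *\<^sub>v ?x) $ i = ?x $ i - ?x $ (i + 1)" if "i < n - 1" for i
    using Bmat_mult_vec[OF Dcone_carrier[OF x] that] .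
  have "lam \<bullet> (Bmat n *\<^sub>v ?x) = (\<Sum>i\<in>{0..<n-1}. lam $ i * (Bmat n *\<^sub>v ?x) $ i)"
    by (simp add: scalar_prod_def Bmat_def)
  also have "\<dots> = 0"
    using mult(3) Bx by (intro sum.neutral) auto
  finally have orth: "lam \<bullet> (Bmat n *\<^sub>v ?x) = 0" .
  have "lam \<in> MD n v"
    unfolding MD_def
  proof (intro CollectI conjI allI impI)
    show "lam \<in> carrier_vec (n - 1)"
      by (simp add: lam_def)
  next
    fix i assume i: "i < n - 1"
    show "0 \<le> (Bmat n *\<^sub>v ?x) $ i"
      using Bx[OF i] x i by (simp add: Dcone_def)
  next
    fix i assume "i < n - 1"
    then show "lam $ i \<le> 0"
      using mult(2) by simp
  qed (fact mult(1) orth)+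
  moreover have "{i. i < n - 1 \<and> lam $ i \<noteq> 0} \<subseteq> ID n v"
    using mult(3) Bx by (auto simp: ID_def)
  moreover have "full_row_rank (Brows n (ID n v))"
    by (rule Brows_full_row_rank) (auto simp: ID_def)
  ultimately show ?thesis
    unfolding KD_def by blast
qed

lemma ID_mem_KD_sorted:
  assumes "\<rho> \<ge> 0" and u: "u \<in> carrier_vec n" and "nonincreasing_vec u"
  shows "ID n (u - \<rho> \<cdot>\<^sub>v wvec n) \<in> KD n (u - \<rho> \<cdot>\<^sub>v wvec n)"
proof (rule ID_mem_KD)
  show "projD n (u - \<rho> \<cdot>\<^sub>v wvec n) \<in> Dcone n"
    unfolding projD_eq_S_prox[OF assms] by (rule S_prox_in_Dcone[OF assms])
  show "\<forall>z\<in>Dcone n. sqnorm (projD n (u - \<rho> \<cdot>\<^sub>v wvec n) - (u - \<rho> \<cdot>\<^sub>v wvec n))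
      \<le> sqnorm (z - (u - \<rho> \<cdot>\<^sub>v wvec n))"
    unfolding projD_eq_S_prox[OF assms] by (rule S_prox_projects_onto_Dcone[OF assms])
qed (use u in \<open>simp add: wvec_def\<close>)

lemma S_prox_constant_on_ID:
  assumes r: "\<rho> \<ge> 0" and u: "u \<in> carrier_vec n" and "nonincreasing_vec u"
    and k: "k \<in> ID n (u - \<rho> \<cdot>\<^sub>v wvec n)"
  shows "S_prox n \<rho> u $ (k + 1) = S_prox n \<rho> u $ k"
  using k Bmat_mult_vec[OF S_prox_minimises(1)[OF r u], of k]
  by (simp add: ID_def projD_eq_S_prox[OF assms(1-3)])

section \<open>The projector onto the active rows\<close>

definition Brows_proj :: "nat \<Rightarrow> nat set \<Rightarrow> real mat" where
  "Brows_proj n K = transpose_mat (Brows n K) * mat_inv (Brows n K * transpose_mat (Brows n K)) * Brows n K"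

lemma mult_assoc_dim:
  "dim_col (A :: 'a :: semiring_0 mat) = dim_row B \<Longrightarrow> dim_col B = dim_row C \<Longrightarrow> A * B * C = A * (B * C)"
  by (rule assoc_mult_mat[of A "dim_row A" "dim_col A" B "dim_col B" C "dim_col C"]) auto

lemma scalar_prod_self_eq_0: "(z :: real vec) \<bullet> z = 0 \<Longrightarrow> z = 0\<^sub>v (dim_vec z)"
  unfolding scalar_prod_def
  by (subst (asm) sum_nonneg_eq_0_iff) (auto intro!: eq_vecI)

lemma mat_inv_eqI:
  assumes A: "A \<in> carrier_mat m m" and X: "X \<in> carrier_mat m m"
    and AX: "A * X = 1\<^sub>m m" and XA: "X * A = 1\<^sub>m m"
  shows "mat_inv A = X"
  unfolding mat_inv_def
proof (rule the_equality)
  fix Y assume "Y \<in> carrier_mat (dim_row A) (dim_row A) \<and> A * Y = 1\<^sub>m (dim_row A) \<and> Y * A = 1\<^sub>m (dim_row A)"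
  then have Y: "Y \<in> carrier_mat m m" "Y * A = 1\<^sub>m m"
    using A by auto
  have "Y = Y * (A * X)"
    using AX Y(1) by simp
  also have "\<dots> = (Y * A) * X"
    by (rule assoc_mult_mat[symmetric, OF Y(1) A X])
  finally show "Y = X"
    using Y X by simp
qed (use assms in simp)

text \<open>A full-row-rank matrix has an invertible Gram matrix: G c = 0 forces
  \<parallel>B_K^T c\<parallel>^2 = c \<bullet> G c = 0.\<close>

lemma Brows_gram_inverse:
  assumes K: "K \<subseteq> {..<n-1}"
  defines "G \<equiv> Brows n K * transpose_mat (Brows n K)"
  shows "mat_inv G \<in> carrier_mat (card K) (card K)"
    and "G * mat_inv G = 1\<^sub>m (card K)" and "mat_inv G * G = 1\<^sub>m (card K)"
proof -
  let ?A = "Brows n K"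
  have A: "?A \<in> carrier_mat (card K) n"
    by (rule Brows_carrier[OF K])
  have G: "G \<in> carrier_mat (card K) (card K)"
    using A by (simp add: G_def)
  have "det G \<noteq> 0"
  proof
    assume "det G = 0"
    then obtain c where c: "c \<in> carrier_vec (card K)" "c \<noteq> 0\<^sub>v (card K)" "G *\<^sub>v c = 0\<^sub>v (card K)"
      using det_0_iff_vec_prod_zero[OF G] by blast
    let ?z = "transpose_mat ?A *\<^sub>v c"
    have z: "?z \<in> carrier_vec n"
      using A c by simp
    have "?A *\<^sub>v ?z = 0\<^sub>v (card K)"
      using A c by (simp add: G_def)
    then have "?z \<bullet> ?z = 0"
      using transpose_vec_mult_scalar[OF A z c(1)] c(1) by simp
    then have "transpose_mat ?A *\<^sub>v c = 0\<^sub>v (dim_col ?A)"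
      using scalar_prod_self_eq_0 A by fastforce
    then show False
      using Brows_full_row_rank[OF K] c A unfolding full_row_rank_def by simp
  qed
  then obtain Gi where Gi: "Gi \<in> carrier_mat (card K) (card K)" "Gi * G = 1\<^sub>m (card K)" "G * Gi = 1\<^sub>m (card K)"
    using det_non_zero_imp_unit[OF G] by (auto simp: Units_def ring_mat_def)
  then show "mat_inv G \<in> carrier_mat (card K) (card K)"
    and "G * mat_inv G = 1\<^sub>m (card K)" and "mat_inv G * G = 1\<^sub>m (card K)"
    using mat_inv_eqI[OF G Gi(1,3,2)] by simp_all
qed

lemma inverse_symmetric:
  fixes G X :: "real mat"
  assumes G: "G \<in> carrier_mat k k" and X: "X \<in> carrier_mat k k"
    and G_sym: "transpose_mat G = G" and GX: "G * X = 1\<^sub>m k"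
  shows "transpose_mat X = X"
proof -
  have XtG: "transpose_mat X * G = 1\<^sub>m k"
    using arg_cong[OF GX, of transpose_mat] G X G_sym by (simp add: transpose_mult)
  have "transpose_mat X = transpose_mat X * (G * X)"
    using GX X by simp
  also have "\<dots> = (transpose_mat X * G) * X"
    using G X by simp
  finally show ?thesis
    using XtG X by simp
qed

lemma Brows_proj_carrier:
  assumes "K \<subseteq> {..<n-1}"
  shows "Brows_proj n K \<in> carrier_mat n n"
  using Brows_carrier[OF assms] Brows_gram_inverse(1)[OF assms] by (simp add: Brows_proj_def)

lemma Brows_proj_symmetric:
  assumes K: "K \<subseteq> {..<n-1}"
  shows "transpose_mat (Brows_proj n K) = Brows_proj n K"
proof -
  let ?A = "Brows n K" and ?X = "mat_inv (Brows n K * transpose_mat (Brows n K))"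
  have A: "?A \<in> carrier_mat (card K) n" and At: "transpose_mat ?A \<in> carrier_mat n (card K)"
    using Brows_carrier[OF K] by auto
  note X = Brows_gram_inverse[OF K]
  have "transpose_mat (?A * transpose_mat ?A) = ?A * transpose_mat ?A"
    unfolding transpose_mult[OF A At] by simp
  then have X_sym: "transpose_mat ?X = ?X"
    by (rule inverse_symmetric[OF mult_carrier_mat[OF A At] X(1) _ X(2)])
  have "transpose_mat (Brows_proj n K) = transpose_mat ?A * transpose_mat (transpose_mat ?A * ?X)"
    unfolding Brows_proj_def by (rule transpose_mult[OF mult_carrier_mat[OF At X(1)] A])
  also have "transpose_mat (transpose_mat ?A * ?X) = ?X * ?A"
    unfolding transpose_mult[OF At X(1)] X_sym by simp
  also have "transpose_mat ?A * (?X * ?A) = Brows_proj n K"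
    unfolding Brows_proj_def by (rule assoc_mult_mat[symmetric, OF At X(1) A])
  finally show ?thesis .
qed

lemma pinv_unique:
  fixes A X Y :: "real mat"
  assumes A: "A \<in> carrier_mat r c" and X: "X \<in> carrier_mat c r" and Y: "Y \<in> carrier_mat c r"
    and X1: "A * X * A = A" and X2: "X * A * X = X"
    and X3: "transpose_mat (A * X) = A * X" and X4: "transpose_mat (X * A) = X * A"
    and Y1: "A * Y * A = A" and Y2: "Y * A * Y = Y"
    and Y3: "transpose_mat (A * Y) = A * Y" and Y4: "transpose_mat (Y * A) = Y * A"
  shows "X = Y"
proof -
  have AX: "A * X \<in> carrier_mat r r" and AY: "A * Y \<in> carrier_mat r r"
    and XA: "X * A \<in> carrier_mat c c" and YA: "Y * A \<in> carrier_mat c c"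
    using A X Y by auto
  have AX_AY: "A * X = A * Y"
  proof -
    have "A * X = (A * Y * A) * X"
      using Y1 by simp
    also have "\<dots> = (A * Y) * (A * X)"
      by (rule assoc_mult_mat[OF AY A X])
    also have "\<dots> = transpose_mat ((A * X) * (A * Y))"
      using X3 Y3 AX AY by (simp add: transpose_mult)
    also have "(A * X) * (A * Y) = (A * X * A) * Y"
      using A X Y by (simp add: mult_assoc_dim del: assoc_mult_mat)
    finally show ?thesis
      using X1 Y3 by simp
  qed
  have XA_YA: "X * A = Y * A"
  proof -
    have "X * A = X * (A * Y * A)"
      using Y1 by simp
    also have "\<dots> = (X * A) * (Y * A)"
      using A X Y by (simp add: mult_assoc_dim del: assoc_mult_mat)
    also have "\<dots> = transpose_mat ((Y * A) * (X * A))"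
      using X4 Y4 XA YA by (simp add: transpose_mult)
    also have "(Y * A) * (X * A) = Y * (A * X * A)"
      using A X Y by (simp add: mult_assoc_dim del: assoc_mult_mat)
    finally show ?thesis
      using X1 Y4 by simp
  qed
  have "X = X * (A * X)"
    using X2 A X by (simp add: mult_assoc_dim del: assoc_mult_mat)
  also have "\<dots> = (X * A) * Y"
    unfolding AX_AY using A X Y by (simp add: mult_assoc_dim del: assoc_mult_mat)
  also have "\<dots> = Y"
    using XA_YA Y2 by simp
  finally show ?thesis .
qed

lemma pinv_eqI:
  fixes A X :: "real mat"
  assumes A: "A \<in> carrier_mat r c" and X: "X \<in> carrier_mat c r"
    and "A * X * A = A" "X * A * X = X"
    and "transpose_mat (A * X) = A * X" "transpose_mat (X * A) = X * A"
  shows "pinv A = X"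
  unfolding pinv_def
proof (rule the_equality)
  fix Y assume "Y \<in> carrier_mat (dim_col A) (dim_row A) \<and> A * Y * A = A \<and> Y * A * Y = Y
      \<and> transpose_mat (A * Y) = A * Y \<and> transpose_mat (Y * A) = Y * A"
  then show "Y = X"
    using pinv_unique[OF A X, of Y] assms by auto
qed (use assms in simp)

lemma pinv_isometric_conj:
  fixes E G X :: "real mat"
  assumes E: "E \<in> carrier_mat m k" and G: "G \<in> carrier_mat k k" and X: "X \<in> carrier_mat k k"
    and EtE: "transpose_mat E * E = 1\<^sub>m k" and GX: "G * X = 1\<^sub>m k" and XG: "X * G = 1\<^sub>m k"
  shows "pinv (E * G * transpose_mat E) = E * X * transpose_mat E"
proof -
  have d: "dim_row E = m" "dim_col E = k" "dim_row G = k" "dim_col G = k" "dim_row X = k" "dim_col X = k"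
    using E G X by auto
  have cancel: "transpose_mat E * (E * Z) = Z" "G * (X * Z) = Z" "X * (G * Z) = Z"
    if "dim_row Z = k" for Z :: "real mat"
    using that d by (simp_all add: mult_assoc_dim[symmetric] EtE GX XG)
  have EEt_sym: "transpose_mat (E * transpose_mat E) = E * transpose_mat E"
    using E by (simp add: transpose_mult[of _ m k _ m])
  have GX': "E * G * transpose_mat E * (E * X * transpose_mat E) = E * transpose_mat E"
    using d by (simp add: mult_assoc_dim cancel del: assoc_mult_mat)
  have XG': "E * X * transpose_mat E * (E * G * transpose_mat E) = E * transpose_mat E"
    using d by (simp add: mult_assoc_dim cancel del: assoc_mult_mat)
  show ?thesis
  proof (rule pinv_eqI[of _ m m])
    show "E * G * transpose_mat E * (E * X * transpose_mat E) * (E * G * transpose_mat E) = E * G * transpose_mat E"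
      unfolding GX' using d by (simp add: mult_assoc_dim cancel del: assoc_mult_mat)
    show "E * X * transpose_mat E * (E * G * transpose_mat E) * (E * X * transpose_mat E) = E * X * transpose_mat E"
      unfolding XG' using d by (simp add: mult_assoc_dim cancel del: assoc_mult_mat)
    show "transpose_mat (E * G * transpose_mat E * (E * X * transpose_mat E))
        = E * G * transpose_mat E * (E * X * transpose_mat E)"
      unfolding GX' by (rule EEt_sym)
    show "transpose_mat (E * X * transpose_mat E * (E * G * transpose_mat E))
        = E * X * transpose_mat E * (E * G * transpose_mat E)"
      unfolding XG' by (rule EEt_sym)
  qed (use E G X in simp_all)
qed

lemma Bmat_pinv_active_eq_Brows_proj:
  assumes K: "K \<subseteq> {..<n-1}"
  defines "\<Sigma> \<equiv> diag_of (n - 1) (\<lambda>i. if i \<in> K then 1 else 0)"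
  shows "transpose_mat (Bmat n) * pinv (\<Sigma> * Bmat n * transpose_mat (Bmat n) * \<Sigma>) * Bmat n = Brows_proj n K"
proof -
  let ?E = "sel_mat n K" and ?B = "Bmat n" and ?k = "card K"
  define G where "G = Brows n K * transpose_mat (Brows n K)"
  note X = Brows_gram_inverse[OF K, folded G_def]
  have BK: "Brows n K = transpose_mat ?E * ?B"
    by (rule Brows_eq_sel_mat[OF K])
  have BKt: "transpose_mat (Brows n K) = transpose_mat ?B * ?E"
    unfolding BK by (simp add: transpose_mult[of _ ?k "n-1" _ n])
  have d: "dim_row ?E = n - 1" "dim_col ?E = ?k" "dim_row ?B = n - 1" "dim_col ?B = n"
    "dim_row (mat_inv G) = ?k" "dim_col (mat_inv G) = ?k"
    using X(1) by (auto simp: sel_mat_def Bmat_def)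
  have "\<Sigma> * ?B * transpose_mat ?B * \<Sigma> = ?E * G * transpose_mat ?E"
    unfolding \<Sigma>_def sel_mat_mult_transpose[OF K, symmetric] G_def unfolding BKt unfolding BK
    using d by (simp add: mult_assoc_dim del: assoc_mult_mat)
  moreover have "pinv (?E * G * transpose_mat ?E) = ?E * mat_inv G * transpose_mat ?E"
    using Brows_carrier[OF K] X
    by (intro pinv_isometric_conj[OF sel_mat_carrier _ X(1) transpose_sel_mat_mult[OF K] X(2,3)])
      (simp add: G_def)
  ultimately show ?thesis
    unfolding Brows_proj_def G_def[symmetric] unfolding BKt unfolding BK
    using d by (simp add: mult_assoc_dim del: assoc_mult_mat)
qed

section \<open>Symmetry of the generalised Jacobian\<close>

lemma inverse_commute:
  fixes G X D :: "real mat"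
  assumes G: "G \<in> carrier_mat k k" and X: "X \<in> carrier_mat k k" and D: "D \<in> carrier_mat k k"
    and GX: "G * X = 1\<^sub>m k" and XG: "X * G = 1\<^sub>m k" and DG: "D * G = G * D"
  shows "X * D = D * X"
proof -
  have "X * D = X * D * (G * X)"
    using GX X D by simp
  also have "\<dots> = X * (D * G) * X"
    using G X D by (simp add: mult_assoc_dim del: assoc_mult_mat)
  also have "\<dots> = (X * G) * D * X"
    using G X D by (simp add: DG mult_assoc_dim del: assoc_mult_mat)
  also have "\<dots> = D * X"
    using XG X D by simp
  finally show ?thesis .
qed

lemma commutes_with_projector:
  fixes A X T D :: "real mat"
  assumes A: "A \<in> carrier_mat k n" and X: "X \<in> carrier_mat k k"
    and GX: "A * transpose_mat A * X = 1\<^sub>m k" and XG: "X * (A * transpose_mat A) = 1\<^sub>m k"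
    and T: "T \<in> carrier_mat n n" "transpose_mat T = T"
    and D: "D \<in> carrier_mat k k" "transpose_mat D = D"
    and intertwine: "T * transpose_mat A = transpose_mat A * D"
  shows "T * (transpose_mat A * X * A) = (transpose_mat A * X * A) * T"
proof -
  let ?At = "transpose_mat A" and ?G = "A * transpose_mat A"
  have d: "dim_row A = k" "dim_col A = n" "dim_row X = k" "dim_col X = k" "dim_row T = n"
    "dim_col T = n" "dim_row D = k" "dim_col D = k"
    using A X T D by auto
  have intertwine': "A * T = D * A"
    using arg_cong[OF intertwine, of transpose_mat] A T D by (simp add: transpose_mult)
  have DG: "D * ?G = ?G * D"
  proof -
    have "D * ?G = (D * A) * ?At"
      using d by (simp add: mult_assoc_dim del: assoc_mult_mat)
    also have "\<dots> = A * (T * ?At)"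
      using d by (simp add: intertwine'[symmetric] mult_assoc_dim del: assoc_mult_mat)
    also have "\<dots> = ?G * D"
      using d by (simp add: intertwine mult_assoc_dim del: assoc_mult_mat)
    finally show ?thesis .
  qed
  have "?G \<in> carrier_mat k k"
    using A by simp
  then have XD: "X * D = D * X"
    by (rule inverse_commute[OF _ X D(1) GX XG DG])
  have "T * (?At * X * A) = (T * ?At) * X * A"
    using d by (simp add: mult_assoc_dim del: assoc_mult_mat)
  also have "\<dots> = ?At * (D * X) * A"
    using d by (simp add: intertwine mult_assoc_dim del: assoc_mult_mat)
  also have "\<dots> = ?At * X * (A * T)"
    using d by (simp add: XD[symmetric] intertwine' mult_assoc_dim del: assoc_mult_mat)
  also have "\<dots> = (?At * X * A) * T"
    using d by (simp add: mult_assoc_dim del: assoc_mult_mat)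
  finally show ?thesis .
qed

lemma diag_of_commutes_Brows_proj:
  assumes K: "K \<subseteq> {..<n-1}" and blocks: "\<And>k. k \<in> K \<Longrightarrow> d (k + 1) = d k"
  shows "diag_of n d * Brows_proj n K = Brows_proj n K * diag_of n d"
proof -
  let ?A = "Brows n K" and ?k = "card K"
  define D where "D = diag_of ?k (\<lambda>b. d (pick K b))"
  have A: "?A \<in> carrier_mat ?k n"
    by (rule Brows_carrier[OF K])
  have "diag_of n d * transpose_mat ?A = transpose_mat ?A * D"
  proof (rule eq_matI)
    fix j b assume "j < dim_row (transpose_mat ?A * D)" "b < dim_col (transpose_mat ?A * D)"
    then have j: "j < n" and b: "b < ?k"
      using A by (auto simp: D_def diag_of_def)
    have q: "pick K b \<in> K" "pick K b < n - 1"
      using pick_less[OF K b] by auto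
    have "d j * ?A $$ (b, j) = ?A $$ (b, j) * d (pick K b)"
      unfolding Brows_index[OF K b j]
      using blocks[OF q(1)] q(2) j by (auto simp: Bmat_index)
    then show "(diag_of n d * transpose_mat ?A) $$ (j, b) = (transpose_mat ?A * D) $$ (j, b)"
      using A j b by (simp add: D_def diag_of_mult_index mult_diag_of_index)
  qed (use A in \<open>auto simp: D_def diag_of_def\<close>)
  then show ?thesis
    unfolding Brows_proj_def
    using Brows_gram_inverse[OF K] A
    by (intro commutes_with_projector[of _ ?k n _ _ D]) (auto simp: D_def)
qed

lemma transpose_conj_symmetric:
  fixes P W :: "real mat"
  assumes "P \<in> carrier_mat n n" "W \<in> carrier_mat n n" "transpose_mat W = W"
  shows "transpose_mat (transpose_mat P * W * P) = transpose_mat P * W * P"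
  using assms by (simp add: transpose_mult[of _ n n _ n])

lemma diag_perm_conj_complement_symmetric:
  assumes K: "K \<subseteq> {..<n-1}" and blocks: "\<And>k. k \<in> K \<Longrightarrow> \<theta> (\<pi> (k + 1)) = \<theta> (\<pi> k)"
  defines "M \<equiv> diag_of n \<theta> * transpose_mat (perm_mat n \<pi>) * (1\<^sub>m n - Brows_proj n K) * perm_mat n \<pi>"
  shows "transpose_mat M = M"
proof -
  let ?P = "perm_mat n \<pi>" and ?T = "diag_of n (\<theta> \<circ> \<pi>)" and ?\<Pi> = "Brows_proj n K"
  have \<Pi>: "?\<Pi> \<in> carrier_mat n n"
    by (rule Brows_proj_carrier[OF K])
  have comm: "?T * ?\<Pi> = ?\<Pi> * ?T"
    using blocks by (intro diag_of_commutes_Brows_proj[OF K]) simp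
  have complement: "1\<^sub>m n - ?\<Pi> \<in> carrier_mat n n"
    using \<Pi> by (rule minus_carrier_mat)
  have "transpose_mat (?T * (1\<^sub>m n - ?\<Pi>)) = transpose_mat (1\<^sub>m n - ?\<Pi>) * ?T"
    using transpose_mult[OF diag_of_carrier complement] by simp
  also have "transpose_mat (1\<^sub>m n - ?\<Pi>) = 1\<^sub>m n - ?\<Pi>"
    using transpose_minus[OF one_carrier_mat \<Pi>] Brows_proj_symmetric[OF K] by simp
  also have "(1\<^sub>m n - ?\<Pi>) * ?T = ?T - ?\<Pi> * ?T"
    using minus_mult_distrib_mat[OF one_carrier_mat \<Pi>, of ?T n] left_mult_one_mat[OF diag_of_carrier]
    by simp
  also have "\<dots> = ?T * (1\<^sub>m n - ?\<Pi>)"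
    using mult_minus_distrib_mat[OF diag_of_carrier one_carrier_mat \<Pi>] right_mult_one_mat[OF diag_of_carrier] comm
    by simp
  finally have "transpose_mat (?T * (1\<^sub>m n - ?\<Pi>)) = ?T * (1\<^sub>m n - ?\<Pi>)" .
  moreover have "M = transpose_mat ?P * (?T * (1\<^sub>m n - ?\<Pi>)) * ?P"
    unfolding M_def diag_of_mult_transpose_perm_mat
    using assoc_mult_mat[of "transpose_mat ?P" n n _ n "1\<^sub>m n - ?\<Pi>" n] complement by simp
  ultimately show ?thesis
    using transpose_conj_symmetric[OF perm_mat_carrier mult_carrier_mat[OF diag_of_carrier complement]]
    by simp
qed

theorem mainTheorem8:
  fixes n :: nat and \<beta> \<rho> :: real and y :: "real vec" and P :: "real mat"
  assumes "\<beta> > 0" and "\<rho> > 0"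
    and "y \<in> carrier_vec n"
    and "is_perm_mat n P" and "nonincreasing_vec (P *\<^sub>v y)"
  shows "(let \<Sigma> = diag_of (n - 1) (\<lambda>i. if i \<in> ID n (P *\<^sub>v y - \<rho> \<cdot>\<^sub>v wvec n) then 1 else 0);
              \<Theta> = diag_of n (\<lambda>i. if \<bar>S_prox n \<rho> y $ i\<bar> \<le> \<beta> then 0 else 1);
              B = Bmat n
          in \<Theta> * transpose_mat P *
               (1\<^sub>m n - transpose_mat B * pinv (\<Sigma> * B * transpose_mat B * \<Sigma>) * B) * P)
         \<in> Mset n \<beta> \<rho> P y"
proof -
  obtain \<pi> where \<pi>: "\<pi> permutes {..<n}" and P: "P = perm_mat n \<pi>"
    using assms(4) unfolding is_perm_mat_def by blast
  define u where "u = P *\<^sub>v y"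
  define K where "K = ID n (u - \<rho> \<cdot>\<^sub>v wvec n)"
  define \<theta> where "\<theta> = (\<lambda>i. if \<bar>S_prox n \<rho> y $ i\<bar> \<le> \<beta> then 0 else (1::real))"
  define Q where "Q = transpose_mat P * (1\<^sub>m n - Brows_proj n K) * P"
  have \<rho>: "\<rho> \<ge> 0" and u: "u = vec n (\<lambda>i. y $ \<pi> i)" and sorted: "nonincreasing_vec u"
    using assms perm_mat_mult_vec[OF \<pi> assms(3)] by (simp_all add: u_def P)
  have u_carrier: "u \<in> carrier_vec n"
    by (simp add: u)
  have K: "K \<subseteq> {..<n-1}"
    by (auto simp: K_def ID_def)
  have "\<theta> (\<pi> (k + 1)) = \<theta> (\<pi> k)" if "k \<in> K" for k
    using S_prox_constant_on_ID[OF \<rho> u_carrier sorted that[unfolded K_def]] K that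
      S_prox_permute[OF \<rho> assms(3) \<pi>, of k] S_prox_permute[OF \<rho> assms(3) \<pi>, of "k + 1"]
    by (auto simp: \<theta>_def u)
  then have "transpose_mat (diag_of n \<theta> * transpose_mat P * (1\<^sub>m n - Brows_proj n K) * P)
      = diag_of n \<theta> * transpose_mat P * (1\<^sub>m n - Brows_proj n K) * P"
    unfolding P by (rule diag_perm_conj_complement_symmetric[OF K])
  moreover have "diag_of n \<theta> * transpose_mat P * (1\<^sub>m n - Brows_proj n K) * P = diag_of n \<theta> * Q"
    using carrier_matD[OF Brows_proj_carrier[OF K]]
    by (simp add: Q_def P diag_of_def perm_mat_def mult_assoc_dim del: assoc_mult_mat)
  moreover have "Q \<in> QS n \<rho> P y"
    using ID_mem_KD_sorted[OF \<rho> u_carrier sorted]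
    unfolding QS_def QD_def Q_def Brows_proj_def K_def u_def by blast
  moreover have "diag_of n \<theta> \<in> dB_prox_l1 n \<beta> (S_prox n \<rho> y)"
    unfolding dB_prox_l1_def \<theta>_def by auto
  ultimately show ?thesis
    unfolding Mset_def Let_def \<theta>_def[symmetric] u_def[symmetric] K_def[symmetric]
      Bmat_pinv_active_eq_Brows_proj[OF K]
    by auto
qed

end
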